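(* Suppose we are given six bases of $V$, called basis 1, …, basis 6. The following are equivalent: (i) the transition matrix from basis 1 to basis 2, from basis 3 to basis 4, and from basis 5 to basis 6 is upper triangular Toeplitz, and the transition matrix from basis 2 to basis 3, from basis 4 to basis 5, and from basis 6 to basis 1 is antidiagonal; (ii) there exists an LR triple $A,B,C$ on $V$ such that basis 1, 2, 3, 4, 5, 6 is an $(A,C)$-basis, $(A,B)$-basis, $(B,A)$-basis, $(B,C)$-basis, $(C,B)$-basis, $(C,A)$-basis of $V$, respectively. If (i), (ii) hold, then the LR triple $A,B,C$ is uniquely determined by the six bases.
   Context: Let $V$ be a vector space over a field $\mathbb F$ with $\dim V=d+1$, $d\ge0$; matrices are indexed by $0,\dots,d$. The transition matrix from a basis $(u_i)$ to a basis $(v_i)$ is $S$ with $v_k=\sum_iS_{ik}u_i$. A matrix is upper triangular Toeplitz if its $(i,k)$-entry is $\gamma_{k-i}$ for $i\le k$ and $0$ for $i>k$, for some scalars $\gamma_0,\dots,\gamma_d$; it is antidiagonal if its $(i,k)$-entry is $0$ whenever $i+k\ne d$. A decomposition of $V$ is a sequence $(V_i)_{i=0}^d$ of one-dimensional subspaces with $V=\bigoplus V_i$; $X$ lowers it if $XV_i=V_{i-1}$ ($1\le i\le d$), $XV_0=0$; raises it if $XV_i=V_{i+1}$ ($0\le i\le d-1$), $XV_d=0$. An ordered pair $X,Y$ is an LR pair if some decomposition (unique, the $(X,Y)$-decomposition) is lowered by $X$ and raised by $Y$. An LR triple is $A,B,C\in\mathrm{End}(V)$ such that every ordered pair of distinct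 elements among $A,B,C$ is an LR pair. For an LR pair $X,Y$, an $(X,Y)$-basis is a basis $(v_i)$ with $v_i$ in the $i$-th component of the $(X,Y)$-decomposition and $Xv_i=v_{i-1}$ for $1\le i\le d$. *)

theory Defs
  imports "HOL.Vector_Spaces"
begin

text \<open>Setting: a vector space V (the type 'v) over a field 'f, with scalar
multiplication scale, of dimension d+1. Sequences indexed by 0..d are
functions on nat; only the values at indices 0..d matter.\<close>

definition is_basis_seq :: "('f::field \<Rightarrow> 'v::ab_group_add \<Rightarrow> 'v) \<Rightarrow> nat \<Rightarrow> (nat \<Rightarrow> 'v) \<Rightarrow> bool" where
  "is_basis_seq scale d v \<longleftrightarrow>
     inj_on v {0..d} \<and>
     \<not> module.dependent scale (v ` {0..d}) \<and>
     module.span scale (v ` {0..d}) = UNIV"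

definition is_transition_matrix ::
  "('f::field \<Rightarrow> 'v::ab_group_add \<Rightarrow> 'v) \<Rightarrow> nat \<Rightarrow> (nat \<Rightarrow> 'v) \<Rightarrow> (nat \<Rightarrow> 'v) \<Rightarrow> (nat \<Rightarrow> nat \<Rightarrow> 'f) \<Rightarrow> bool" where
  "is_transition_matrix scale d u v S \<longleftrightarrow>
     (\<forall>k\<le>d. v k = (\<Sum>i\<le>d. scale (S i k) (u i)))"

definition upper_triangular_toeplitz :: "nat \<Rightarrow> (nat \<Rightarrow> nat \<Rightarrow> 'f::field) \<Rightarrow> bool" where
  "upper_triangular_toeplitz d S \<longleftrightarrow>
     (\<exists>\<gamma>::nat \<Rightarrow> 'f. \<forall>i\<le>d. \<forall>k\<le>d. S i k = (if i \<le> k then \<gamma> (k - i) else 0))"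

definition antidiagonal :: "nat \<Rightarrow> (nat \<Rightarrow> nat \<Rightarrow> 'f::field) \<Rightarrow> bool" where
  "antidiagonal d S \<longleftrightarrow> (\<forall>i\<le>d. \<forall>k\<le>d. i + k \<noteq> d \<longrightarrow> S i k = 0)"

text \<open>The transition matrix from u to v (unique, since u is a basis) is upper
triangular Toeplitz / antidiagonal.\<close>
definition trans_UTT where
  "trans_UTT scale d u v \<longleftrightarrow> (\<exists>S. is_transition_matrix scale d u v S \<and> upper_triangular_toeplitz d S)"

definition trans_antidiag where
  "trans_antidiag scale d u v \<longleftrightarrow> (\<exists>S. is_transition_matrix scale d u v S \<and> antidiagonal d S)"

definition is_decomposition :: "('f::field \<Rightarrow> 'v::ab_group_add \<Rightarrow> 'v) \<Rightarrow> nat \<Rightarrow> (nat \<Rightarrow> 'v set) \<Rightarrow> bool" where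
  "is_decomposition scale d Vs \<longleftrightarrow>
     (\<forall>i\<le>d. module.subspace scale (Vs i) \<and> vector_space.dim scale (Vs i) = 1) \<and>
     (\<forall>v. \<exists>!x::nat \<Rightarrow> 'v. (\<forall>i\<le>d. x i \<in> Vs i) \<and> (\<forall>i>d. x i = 0) \<and> v = (\<Sum>i\<le>d. x i))"

definition lowers :: "nat \<Rightarrow> ('v::ab_group_add \<Rightarrow> 'v) \<Rightarrow> (nat \<Rightarrow> 'v set) \<Rightarrow> bool" where
  "lowers d X Vs \<longleftrightarrow> (\<forall>i. 1 \<le> i \<and> i \<le> d \<longrightarrow> X ` Vs i = Vs (i - 1)) \<and> X ` Vs 0 = {0}"

definition raises :: "nat \<Rightarrow> ('v::ab_group_add \<Rightarrow> 'v) \<Rightarrow> (nat \<Rightarrow> 'v set) \<Rightarrow> bool" where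
  "raises d Y Vs \<longleftrightarrow> (\<forall>i<d. Y ` Vs i = Vs (i + 1)) \<and> Y ` Vs d = {0}"

definition is_LR_pair :: "('f::field \<Rightarrow> 'v::ab_group_add \<Rightarrow> 'v) \<Rightarrow> nat \<Rightarrow> ('v \<Rightarrow> 'v) \<Rightarrow> ('v \<Rightarrow> 'v) \<Rightarrow> bool" where
  "is_LR_pair scale d X Y \<longleftrightarrow>
     Vector_Spaces.linear scale scale X \<and> Vector_Spaces.linear scale scale Y \<and>
     (\<exists>Vs. is_decomposition scale d Vs \<and> lowers d X Vs \<and> raises d Y Vs)"

definition is_LR_triple :: "('f::field \<Rightarrow> 'v::ab_group_add \<Rightarrow> 'v) \<Rightarrow> nat \<Rightarrow> ('v \<Rightarrow> 'v) \<Rightarrow> ('v \<Rightarrow> 'v) \<Rightarrow> ('v \<Rightarrow> 'v) \<Rightarrow> bool" where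
  "is_LR_triple scale d A B C \<longleftrightarrow>
     is_LR_pair scale d A B \<and> is_LR_pair scale d B A \<and>
     is_LR_pair scale d A C \<and> is_LR_pair scale d C A \<and>
     is_LR_pair scale d B C \<and> is_LR_pair scale d C B"

text \<open>An (X,Y)-basis. The (X,Y)-decomposition is unique, so "the i-th component of
the (X,Y)-decomposition" is the i-th component of any decomposition lowered by X and raised by Y.\<close>
definition is_XY_basis :: "('f::field \<Rightarrow> 'v::ab_group_add \<Rightarrow> 'v) \<Rightarrow> nat \<Rightarrow> ('v \<Rightarrow> 'v) \<Rightarrow> ('v \<Rightarrow> 'v) \<Rightarrow> (nat \<Rightarrow> 'v) \<Rightarrow> bool" where
  "is_XY_basis scale d X Y v \<longleftrightarrow>
     is_LR_pair scale d X Y \<and> is_basis_seq scale d v \<and>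
     (\<exists>Vs. is_decomposition scale d Vs \<and> lowers d X Vs \<and> raises d Y Vs \<and> (\<forall>i\<le>d. v i \<in> Vs i)) \<and>
     (\<forall>i. 1 \<le> i \<and> i \<le> d \<longrightarrow> X (v i) = v (i - 1))"

definition six_bases_triple where
  "six_bases_triple scale d u1 u2 u3 u4 u5 u6 A B C \<longleftrightarrow>
     is_LR_triple scale d A B C \<and>
     is_XY_basis scale d A C u1 \<and> is_XY_basis scale d A B u2 \<and>
     is_XY_basis scale d B A u3 \<and> is_XY_basis scale d B C u4 \<and>
     is_XY_basis scale d C B u5 \<and> is_XY_basis scale d C A u6"

end

theory Submission
  imports Defs
begin

text \<open>An \<open>(X,Y)\<close>-basis is the same thing as a basis on which \<open>X\<close> acts as the lowering shift
and \<open>Y\<close> maps each vector to a nonzero multiple of the next one. Two bases lowered by the same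
\<open>X\<close> differ by a matrix commuting with the shift, i.e. by an upper triangular Toeplitz matrix.
An \<open>(X,Y)\<close>-basis and a \<open>(Y,X)\<close>-basis span the same lines in opposite order, since both
are obtained from the kernel of \<open>X\<close> by repeatedly applying \<open>Y\<close>; so they differ by an
antidiagonal matrix. Conversely, let \<open>A\<close>, \<open>B\<close>, \<open>C\<close> be
the lowering maps of bases 1, 3, 5: the Toeplitz conditions make them lower bases 2, 4, 6 as
well, and by the antidiagonal conditions the lowering map of a basis raises its reversal. This
also shows that \<open>A\<close>, \<open>B\<close>, \<open>C\<close> are unique.\<close>

definition lowers_seq :: "nat \<Rightarrow> ('v::zero \<Rightarrow> 'v) \<Rightarrow> (nat \<Rightarrow> 'v) \<Rightarrow> bool" where
  "lowers_seq d X u \<longleftrightarrow> X (u 0) = 0 \<and> (\<forall>i. 1 \<le> i \<and> i \<le> d \<longrightarrow> X (u i) = u (i - 1))"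

definition raises_seq ::
  "('f::field \<Rightarrow> 'v::ab_group_add \<Rightarrow> 'v) \<Rightarrow> nat \<Rightarrow> ('v \<Rightarrow> 'v) \<Rightarrow> (nat \<Rightarrow> 'v) \<Rightarrow> bool" where
  "raises_seq scale d Y u \<longleftrightarrow>
     Y (u d) = 0 \<and> (\<forall>i<d. \<exists>b. b \<noteq> 0 \<and> Y (u i) = scale b (u (Suc i)))"

context vector_space
begin

interpretation vector_space_pair scale scale ..

subsection \<open>Bases given as sequences\<close>

lemma basis_seq_coeffs_eq_0:
  assumes u: "is_basis_seq scale d u" and comb: "(\<Sum>i\<le>d. c i *s u i) = 0" and "j \<le> d"
  shows "c j = 0"
proof (rule ccontr)
  assume "c j \<noteq> 0"
  let ?U = "u ` {0..d}"
  have inj: "inj_on u {0..d}" and indep: "\<not> dependent ?U"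
    using u by (auto simp: is_basis_seq_def)
  define w where "w = (\<lambda>x. c (inv_into {0..d} u x))"
  have "(\<Sum>x\<in>?U. w x *s x) = (\<Sum>i\<in>{0..d}. w (u i) *s u i)"
    by (rule sum.reindex[OF inj, unfolded comp_def])
  also have "\<dots> = (\<Sum>i\<le>d. c i *s u i)"
    using inj by (auto simp: w_def atLeast0AtMost intro!: sum.cong)
  finally have "(\<Sum>x\<in>?U. w x *s x) = 0" using comb by simp
  moreover have "w (u j) \<noteq> 0" "u j \<in> ?U"
    using \<open>c j \<noteq> 0\<close> inj \<open>j \<le> d\<close> by (auto simp: w_def)
  ultimately have "dependent ?U" using dependent_finite[of ?U] by blast
  with indep show False ..
qed

lemma basis_seq_expansion:
  assumes "is_basis_seq scale d u"
  obtains c where "x = (\<Sum>i\<le>d. c i *s u i)"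
proof -
  let ?U = "u ` {0..d}"
  have inj: "inj_on u {0..d}" and "span ?U = UNIV"
    using assms by (auto simp: is_basis_seq_def)
  then obtain w where "x = (\<Sum>y\<in>?U. w y *s y)" by (auto simp: span_finite)
  also have "\<dots> = (\<Sum>i\<in>{0..d}. w (u i) *s u i)"
    by (rule sum.reindex[OF inj, unfolded comp_def])
  finally show ?thesis by (rule that[unfolded atLeast0AtMost[symmetric]])
qed

lemma basis_seq_coeffs_unique:
  assumes "is_basis_seq scale d u" and "(\<Sum>i\<le>d. c i *s u i) = (\<Sum>i\<le>d. c' i *s u i)" and "j \<le> d"
  shows "c j = c' j"
proof -
  have "(\<Sum>i\<le>d. (c i - c' i) *s u i) = 0"
    using assms(2) by (simp add: scale_left_diff_distrib sum_subtractf)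
  from basis_seq_coeffs_eq_0[OF assms(1) this assms(3)] show ?thesis by simp
qed

lemma basis_seq_nonzero:
  assumes "is_basis_seq scale d u" and "j \<le> d"
  shows "u j \<noteq> 0"
  using assms dependent_zero[of "u ` {0..d}"] by (force simp: is_basis_seq_def)

lemma linear_eq_on_basis_seq:
  assumes u: "is_basis_seq scale d u"
    and X: "Vector_Spaces.linear scale scale X" and X': "Vector_Spaces.linear scale scale X'"
    and eq: "\<And>i. i \<le> d \<Longrightarrow> X (u i) = X' (u i)"
  shows "X = X'"
proof
  fix x
  obtain c where "x = (\<Sum>i\<le>d. c i *s u i)" using basis_seq_expansion[OF u] .
  then show "X x = X' x"
    using eq by (simp add: linear_sum[OF X] linear_sum[OF X'] linear_scale[OF X] linear_scale[OF X'])
qed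

lemma linear_exists_on_basis_seq:
  assumes "is_basis_seq scale d u"
  shows "\<exists>X. Vector_Spaces.linear scale scale X \<and> (\<forall>i\<le>d. X (u i) = f i)"
proof -
  have inj: "inj_on u {0..d}" and indep: "independent (u ` {0..d})"
    using assms by (auto simp: is_basis_seq_def)
  let ?X = "construct (u ` {0..d}) (\<lambda>x. f (inv_into {0..d} u x))"
  have "Vector_Spaces.linear scale scale ?X" by (rule linear_construct[OF indep])
  moreover have "\<forall>i\<le>d. ?X (u i) = f i"
    using construct_basis[OF indep] inj by auto
  ultimately show ?thesis by blast
qed

lemma span_singleton_scale:
  assumes "c \<noteq> 0"
  shows "span {c *s x} = span {x}"
proof -
  have "x = inverse c *s (c *s x)" using assms by simp
  then show ?thesis unfolding span_eq by (metis insert_subset span_base span_scale singletonI empty_subsetI)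
qed

lemma linear_image_span_singleton:
  assumes "Vector_Spaces.linear scale scale X"
  shows "X ` span {x} = span {X x}"
  using linear_span_image[OF assms, of "{x}"] by simp

lemma span_singleton_eq_imp_scale:
  assumes "span {x} = span {y}" and "y \<noteq> 0"
  obtains b where "b \<noteq> 0" and "x = b *s y"
proof -
  obtain b where b: "x = b *s y"
    using assms(1) span_base[of x "{x}"] by (auto simp: span_singleton)
  have "b \<noteq> 0"
  proof
    assume "b = 0"
    have "y \<in> span {x}" using assms(1) span_base[of y "{y}"] by simp
    with \<open>b = 0\<close> b \<open>y \<noteq> 0\<close> show False by (simp add: span_singleton)
  qed
  then show ?thesis using b by (rule that)
qed

lemma subspace_dim_1_eq_span:
  assumes W: "subspace W" and "dim W = 1" and "x \<in> W" "x \<noteq> 0"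
  shows "W = span {x}"
proof
  obtain B where B: "B \<subseteq> W" "independent B" "W \<subseteq> span B" "card B = dim W"
    by (rule basis_exists)
  then obtain b where "B = {b}" using \<open>dim W = 1\<close> by (metis card_1_singletonE)
  then obtain k where "x = k *s b" using B \<open>x \<in> W\<close> by (auto simp: span_singleton)
  with \<open>x \<noteq> 0\<close> have "span {x} = span {b}" by (simp add: span_singleton_scale)
  then show "W \<subseteq> span {x}" using B \<open>B = {b}\<close> by simp
  show "span {x} \<subseteq> W" using W \<open>x \<in> W\<close> by (simp add: span_minimal)
qed

lemma decomposition_span_basis_seq:
  assumes u: "is_basis_seq scale d u"
  shows "is_decomposition scale d (\<lambda>i. span {u i})"
  unfolding is_decomposition_def
proof (intro conjI allI impI)
  fix i assume "i \<le> d"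
  show "subspace (span {u i})" by (rule subspace_span)
  have "independent {u i}" using basis_seq_nonzero[OF u \<open>i \<le> d\<close>] by simp
  then show "dim (span {u i}) = 1" using dim_span_eq_card_independent[of "{u i}"] by simp
next
  fix x
  let ?P = "\<lambda>y. (\<forall>i\<le>d. y i \<in> span {u i}) \<and> (\<forall>i>d. y i = 0) \<and> x = (\<Sum>i\<le>d. y i)"
  obtain c where c: "x = (\<Sum>i\<le>d. c i *s u i)" using basis_seq_expansion[OF u] .
  have ex: "?P (\<lambda>i. if i \<le> d then c i *s u i else 0)"
    using c by (auto simp: span_singleton)
  have unique: "y = z" if "?P y" "?P z" for y z
  proof -
    have "\<forall>i. \<exists>k. i \<le> d \<longrightarrow> y i = k *s u i" "\<forall>i. \<exists>k. i \<le> d \<longrightarrow> z i = k *s u i"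
      using that by (auto simp: span_singleton)
    then obtain p q where p: "\<And>i. i \<le> d \<Longrightarrow> y i = p i *s u i"
      and q: "\<And>i. i \<le> d \<Longrightarrow> z i = q i *s u i" by metis
    have "(\<Sum>i\<le>d. p i *s u i) = (\<Sum>i\<le>d. q i *s u i)"
      using that p q by (metis (no_types, lifting) atMost_iff sum.cong)
    then have "p i = q i" if "i \<le> d" for i using basis_seq_coeffs_unique[OF u _ that] by blast
    with p q that show "y = z" by (metis not_le_imp_less ext)
  qed
  show "\<exists>!y. ?P y" by (rule ex1I[of ?P, OF ex]) (rule unique[OF _ ex])
qed

subsection \<open>Lowering and raising maps\<close>

lemma lowers_seq_sum:
  assumes X: "Vector_Spaces.linear scale scale X" and Xu: "lowers_seq d X u"
  shows "X (\<Sum>i\<le>d. c i *s u i) = (\<Sum>i\<le>d. (if i < d then c (Suc i) else 0) *s u i)"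
proof -
  have "X (\<Sum>i\<le>d. c i *s u i) = (\<Sum>i<Suc d. c i *s X (u i))"
    by (simp add: linear_sum[OF X] linear_scale[OF X] lessThan_Suc_atMost)
  also have "\<dots> = c 0 *s X (u 0) + (\<Sum>i<d. c (Suc i) *s X (u (Suc i)))"
    by (rule sum.lessThan_Suc_shift)
  also have "\<dots> = (\<Sum>i<d. c (Suc i) *s u i)"
    using Xu by (auto simp: lowers_seq_def intro!: sum.cong)
  also have "\<dots> = (\<Sum>i<Suc d. (if i < d then c (Suc i) else 0) *s u i)"
    by simp
  finally show ?thesis by (simp add: lessThan_Suc_atMost)
qed

lemma lowers_seq_kernel:
  assumes u: "is_basis_seq scale d u" and X: "Vector_Spaces.linear scale scale X"
    and Xu: "lowers_seq d X u" and "X x = 0"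
  shows "x \<in> span {u 0}"
proof -
  obtain c where x: "x = (\<Sum>i\<le>d. c i *s u i)" using basis_seq_expansion[OF u] .
  have "(\<Sum>i\<le>d. (if i < d then c (Suc i) else 0) *s u i) = 0"
    using lowers_seq_sum[OF X Xu] x \<open>X x = 0\<close> by simp
  from basis_seq_coeffs_eq_0[OF u this]
  have "c (Suc i) = 0" if "i < d" for i
    using that by (metis less_imp_le)
  then have "x = (\<Sum>i\<le>d. if i = 0 then c 0 *s u 0 else 0)"
    unfolding x by (intro sum.cong) (auto simp: gr0_conv_Suc)
  then show ?thesis by (simp add: span_base span_scale)
qed

lemma lowers_seq_exists:
  assumes "is_basis_seq scale d u"
  obtains X where "Vector_Spaces.linear scale scale X" and "lowers_seq d X u"
proof -
  obtain X where "Vector_Spaces.linear scale scale X"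
    and "\<forall>i\<le>d. X (u i) = (if i = 0 then 0 else u (i - 1))"
    using linear_exists_on_basis_seq[OF assms, of "\<lambda>i. if i = 0 then 0 else u (i - 1)"] by blast
  then show ?thesis by (intro that) (auto simp: lowers_seq_def)
qed

lemma lowers_seq_unique:
  assumes "is_basis_seq scale d u"
    and "Vector_Spaces.linear scale scale X" "lowers_seq d X u"
    and "Vector_Spaces.linear scale scale X'" "lowers_seq d X' u"
  shows "X = X'"
proof (rule linear_eq_on_basis_seq[OF assms(1,2,4)])
  show "X (u i) = X' (u i)" if "i \<le> d" for i
    using assms(3,5) that by (cases i) (auto simp: lowers_seq_def)
qed

lemma is_XY_basis_iff:
  "is_XY_basis scale d X Y u \<longleftrightarrow>
     Vector_Spaces.linear scale scale X \<and> Vector_Spaces.linear scale scale Y \<and>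
     is_basis_seq scale d u \<and> lowers_seq d X u \<and> raises_seq scale d Y u"
proof
  assume "is_XY_basis scale d X Y u"
  then obtain Vs where X: "Vector_Spaces.linear scale scale X"
    and Y: "Vector_Spaces.linear scale scale Y" and u: "is_basis_seq scale d u"
    and D: "is_decomposition scale d Vs" and L: "lowers d X Vs" and R: "raises d Y Vs"
    and mem: "\<forall>i\<le>d. u i \<in> Vs i" and Xu: "\<forall>i. 1 \<le> i \<and> i \<le> d \<longrightarrow> X (u i) = u (i - 1)"
    unfolding is_XY_basis_def is_LR_pair_def by (elim conjE exE) simp
  have Vs: "Vs i = span {u i}" if "i \<le> d" for i
    using D mem basis_seq_nonzero[OF u] that
    by (intro subspace_dim_1_eq_span) (auto simp: is_decomposition_def)
  have image: "Z ` Vs i = span {Z (u i)}" if "Vector_Spaces.linear scale scale Z" "i \<le> d" for Z i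
    using Vs linear_image_span_singleton that by simp
  have "span {X (u 0)} = {0}" "span {Y (u d)} = {0}"
    using L R image[OF X, of 0] image[OF Y, of d] by (auto simp: lowers_def raises_def)
  then have "X (u 0) = 0" "Y (u d) = 0"
    using span_base[of "X (u 0)" "{X (u 0)}"] span_base[of "Y (u d)" "{Y (u d)}"] by auto
  moreover have "\<exists>b. b \<noteq> 0 \<and> Y (u i) = b *s u (Suc i)" if "i < d" for i
  proof -
    have "span {Y (u i)} = span {u (Suc i)}"
      using R image[OF Y, of i] Vs[of "Suc i"] that by (simp add: raises_def)
    then show ?thesis
      using basis_seq_nonzero[OF u, of "Suc i"] that by (metis span_singleton_eq_imp_scale Suc_leI)
  qed
  ultimately show "Vector_Spaces.linear scale scale X \<and> Vector_Spaces.linear scale scale Y \<and>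
     is_basis_seq scale d u \<and> lowers_seq d X u \<and> raises_seq scale d Y u"
    using X Y u Xu by (simp add: lowers_seq_def raises_seq_def)
next
  assume "Vector_Spaces.linear scale scale X \<and> Vector_Spaces.linear scale scale Y \<and>
     is_basis_seq scale d u \<and> lowers_seq d X u \<and> raises_seq scale d Y u"
  then have X: "Vector_Spaces.linear scale scale X" and Y: "Vector_Spaces.linear scale scale Y"
    and u: "is_basis_seq scale d u" and Xu: "lowers_seq d X u" and Yu: "raises_seq scale d Y u"
    by blast+
  let ?Vs = "\<lambda>i. span {u i}"
  have "lowers d X ?Vs"
    using Xu by (simp add: lowers_def lowers_seq_def linear_image_span_singleton[OF X])
  moreover have "raises d Y ?Vs"
    using Yu by (auto simp: raises_def raises_seq_def linear_image_span_singleton[OF Y]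
        span_singleton_scale)
  ultimately have "is_LR_pair scale d X Y" "\<exists>Vs. is_decomposition scale d Vs \<and> lowers d X Vs \<and> raises d Y Vs \<and> (\<forall>i\<le>d. u i \<in> Vs i)"
    using X Y decomposition_span_basis_seq[OF u] by (auto simp: is_LR_pair_def intro: span_base)
  then show "is_XY_basis scale d X Y u"
    using u Xu by (simp add: is_XY_basis_def lowers_seq_def)
qed

subsection \<open>Transition matrices\<close>

lemma sum_toeplitz_column:
  fixes d k :: nat
  assumes "k \<le> d"
  shows "(\<Sum>i\<le>d. (if i \<le> k then g (k - i) else 0) *s u i) = (\<Sum>i\<le>k. g (k - i) *s u i)"
proof -
  have "(\<Sum>i\<le>d. (if i \<le> k then g (k - i) else 0) *s u i) =
      (\<Sum>i\<le>k. (if i \<le> k then g (k - i) else 0) *s u i)"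
    using assms by (intro sum.mono_neutral_right) auto
  then show ?thesis by simp
qed

lemma trans_UTT_iff_sum:
  "trans_UTT scale d u v \<longleftrightarrow> (\<exists>g. \<forall>k\<le>d. v k = (\<Sum>i\<le>k. g (k - i) *s u i))"
proof
  assume "trans_UTT scale d u v"
  then obtain S g where S: "\<forall>k\<le>d. v k = (\<Sum>i\<le>d. S i k *s u i)"
    and g: "\<forall>i\<le>d. \<forall>k\<le>d. S i k = (if i \<le> k then g (k - i) else 0)"
    unfolding trans_UTT_def is_transition_matrix_def upper_triangular_toeplitz_def by blast
  have "v k = (\<Sum>i\<le>k. g (k - i) *s u i)" if "k \<le> d" for k
  proof -
    have "v k = (\<Sum>i\<le>d. (if i \<le> k then g (k - i) else 0) *s u i)"
      using S g that by (auto intro!: sum.cong)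
    then show ?thesis using sum_toeplitz_column[OF that] by simp
  qed
  then show "\<exists>g. \<forall>k\<le>d. v k = (\<Sum>i\<le>k. g (k - i) *s u i)" by blast
next
  assume "\<exists>g. \<forall>k\<le>d. v k = (\<Sum>i\<le>k. g (k - i) *s u i)"
  then obtain g where "\<forall>k\<le>d. v k = (\<Sum>i\<le>k. g (k - i) *s u i)" ..
  then show "trans_UTT scale d u v"
    unfolding trans_UTT_def is_transition_matrix_def upper_triangular_toeplitz_def
    by (intro exI[of _ "\<lambda>i k. if i \<le> k then g (k - i) else 0"] conjI exI[of _ g])
      (simp_all add: sum_toeplitz_column)
qed

lemma trans_UTT_imp_lowers_seq:
  assumes X: "Vector_Spaces.linear scale scale X" and Xu: "lowers_seq d X u"
    and "trans_UTT scale d u v"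
  shows "lowers_seq d X v"
proof -
  obtain g where v: "\<And>k. k \<le> d \<Longrightarrow> v k = (\<Sum>i\<le>k. g (k - i) *s u i)"
    using \<open>trans_UTT scale d u v\<close> by (auto simp: trans_UTT_iff_sum)
  have "X (v 0) = 0"
    using v[of 0] Xu by (simp add: linear_scale[OF X] lowers_seq_def)
  have step: "X (v (Suc k)) = v k" if "Suc k \<le> d" for k
  proof -
    have "X (v (Suc k)) = (\<Sum>i\<le>Suc k. g (Suc k - i) *s X (u i))"
      by (simp only: v[OF that] linear_sum[OF X] linear_scale[OF X])
    also have "\<dots> = g (Suc k) *s X (u 0) + (\<Sum>i\<le>k. g (Suc k - Suc i) *s X (u (Suc i)))"
      by (simp only: sum.atMost_Suc_shift diff_zero)
    also have "\<dots> = (\<Sum>i\<le>k. g (k - i) *s u i)"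
      using Xu that by (auto simp: lowers_seq_def intro!: sum.cong)
    also have "\<dots> = v k"
      using v that by simp
    finally show ?thesis .
  qed
  have "X (v i) = v (i - 1)" if "1 \<le> i" "i \<le> d" for i
    using step[of "i - 1"] that by simp
  with \<open>X (v 0) = 0\<close> show ?thesis by (simp add: lowers_seq_def)
qed

lemma lowers_seq_imp_trans_UTT:
  assumes u: "is_basis_seq scale d u" and X: "Vector_Spaces.linear scale scale X"
    and Xu: "lowers_seq d X u" and Xv: "lowers_seq d X v"
  shows "trans_UTT scale d u v"
proof -
  have "\<forall>k. \<exists>c. v k = (\<Sum>i\<le>d. c i *s u i)" using basis_seq_expansion[OF u] by metis
  then obtain c where c: "\<And>k. v k = (\<Sum>i\<le>d. c k i *s u i)" by metis
  have shift: "c k (Suc i) = (if k = 0 then 0 else c (k - 1) i)" if "k \<le> d" "i < d" for k i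
  proof -
    have "(\<Sum>i\<le>d. (if i < d then c k (Suc i) else 0) *s u i) = X (v k)"
      using lowers_seq_sum[OF X Xu] c by simp
    also have "\<dots> = (\<Sum>i\<le>d. (if k = 0 then 0 else c (k - 1) i) *s u i)"
      using Xv \<open>k \<le> d\<close> c[of "k - 1"] by (cases "k = 0") (auto simp: lowers_seq_def)
    finally have "(\<Sum>i\<le>d. (if i < d then c k (Suc i) else 0) *s u i) =
        (\<Sum>i\<le>d. (if k = 0 then 0 else c (k - 1) i) *s u i)" .
    from basis_seq_coeffs_unique[OF u this, of i] show ?thesis
      using that by simp
  qed
  have toeplitz: "\<forall>k\<le>d. c k i = (if i \<le> k then c (k - i) 0 else 0)" if "i \<le> d" for i
    using that
  proof (induction i)
    case (Suc i)
    show ?case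
    proof (intro allI impI)
      fix k assume "k \<le> d"
      show "c k (Suc i) = (if Suc i \<le> k then c (k - Suc i) 0 else 0)"
      proof (cases "k = 0")
        case False
        then have "c k (Suc i) = c (k - 1) i" using shift \<open>k \<le> d\<close> Suc.prems by simp
        with False show ?thesis using Suc \<open>k \<le> d\<close> by auto
      qed (use shift Suc.prems in simp)
    qed
  qed simp
  have "is_transition_matrix scale d u v (\<lambda>i k. c k i)"
    using c by (simp add: is_transition_matrix_def)
  moreover have "upper_triangular_toeplitz d (\<lambda>i k. c k i)"
    unfolding upper_triangular_toeplitz_def using toeplitz by (intro exI[of _ "\<lambda>j. c j 0"]) blast
  ultimately show ?thesis unfolding trans_UTT_def by blast
qed

lemma sum_antidiagonal_column:
  assumes "antidiagonal d S" and "k \<le> d"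
  shows "(\<Sum>i\<le>d. S i k *s u i) = S (d - k) k *s u (d - k)"
proof -
  have "(\<Sum>i\<le>d. S i k *s u i) = (\<Sum>i\<le>d. if i = d - k then S (d - k) k *s u i else 0)"
    using assms by (intro sum.cong) (auto simp: antidiagonal_def)
  then show ?thesis by simp
qed

lemma trans_antidiag_iff:
  "trans_antidiag scale d u v \<longleftrightarrow> (\<forall>k\<le>d. v k \<in> span {u (d - k)})"
proof
  assume "trans_antidiag scale d u v"
  then obtain S where "\<forall>k\<le>d. v k = (\<Sum>i\<le>d. S i k *s u i)" and "antidiagonal d S"
    unfolding trans_antidiag_def is_transition_matrix_def by blast
  then show "\<forall>k\<le>d. v k \<in> span {u (d - k)}"
    by (simp add: sum_antidiagonal_column span_base span_scale)
next
  assume "\<forall>k\<le>d. v k \<in> span {u (d - k)}"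
  then have "\<forall>k. \<exists>a. k \<le> d \<longrightarrow> v k = a *s u (d - k)"
    by (auto simp: span_singleton)
  then obtain a where a: "\<And>k. k \<le> d \<Longrightarrow> v k = a k *s u (d - k)"
    by metis
  define S where "S i k = (if i + k = d then a k else 0)" for i k
  have "antidiagonal d S" by (simp add: antidiagonal_def S_def)
  moreover have "is_transition_matrix scale d u v S"
    unfolding is_transition_matrix_def
  proof (intro allI impI)
    fix k assume "k \<le> d"
    have "(\<Sum>i\<le>d. S i k *s u i) = S (d - k) k *s u (d - k)"
      by (rule sum_antidiagonal_column[OF \<open>antidiagonal d S\<close> \<open>k \<le> d\<close>])
    with a \<open>k \<le> d\<close> show "v k = (\<Sum>i\<le>d. S i k *s u i)"
      by (simp add: S_def)
  qed
  ultimately show "trans_antidiag scale d u v"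
    unfolding trans_antidiag_def by blast
qed

lemma trans_antidiag_sym:
  assumes "is_basis_seq scale d v" and "trans_antidiag scale d u v"
  shows "trans_antidiag scale d v u"
  unfolding trans_antidiag_iff
proof (intro allI impI)
  fix k assume "k \<le> d"
  then have "v (d - k) \<in> span {u k}"
    using assms(2) unfolding trans_antidiag_iff by (metis diff_diff_cancel diff_le_self)
  then obtain a where a: "v (d - k) = a *s u k" by (auto simp: span_singleton)
  with basis_seq_nonzero[OF assms(1), of "d - k"] have "a \<noteq> 0" by auto
  with a have "u k = inverse a *s v (d - k)" by simp
  then show "u k \<in> span {v (d - k)}" by (simp add: span_base span_scale)
qed

lemma trans_antidiag_imp_raises_seq:
  assumes u: "is_basis_seq scale d u" and Y: "Vector_Spaces.linear scale scale Y"
    and Yw: "lowers_seq d Y w" and "trans_antidiag scale d w u"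
  shows "raises_seq scale d Y u"
proof -
  have "\<forall>k. \<exists>a. k \<le> d \<longrightarrow> u k = a *s w (d - k)"
    using \<open>trans_antidiag scale d w u\<close> by (auto simp: trans_antidiag_iff span_singleton)
  then obtain a where a: "\<And>k. k \<le> d \<Longrightarrow> u k = a k *s w (d - k)"
    by metis
  have a_nonzero: "a k \<noteq> 0" if "k \<le> d" for k
    using a[OF that] basis_seq_nonzero[OF u that] by auto
  have "Y (u d) = 0"
    using a[of d] Yw by (simp add: linear_scale[OF Y] lowers_seq_def)
  moreover have "\<exists>b. b \<noteq> 0 \<and> Y (u i) = b *s u (Suc i)" if "i < d" for i
  proof -
    have "Y (u i) = a i *s w (d - Suc i)"
      using a[of i] Yw that by (simp add: linear_scale[OF Y] lowers_seq_def)
    also have "w (d - Suc i) = inverse (a (Suc i)) *s u (Suc i)"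
      using a[of "Suc i"] a_nonzero[of "Suc i"] that by simp
    finally have "Y (u i) = (a i * inverse (a (Suc i))) *s u (Suc i)" by simp
    moreover have "a i * inverse (a (Suc i)) \<noteq> 0" using a_nonzero that by simp
    ultimately show ?thesis by blast
  qed
  ultimately show ?thesis by (simp add: raises_seq_def)
qed

lemma XY_bases_imp_trans_antidiag:
  assumes "is_XY_basis scale d X Y u" and "is_XY_basis scale d Y X v"
  shows "trans_antidiag scale d u v"
proof -
  have X: "Vector_Spaces.linear scale scale X" and Y: "Vector_Spaces.linear scale scale Y"
    and u: "is_basis_seq scale d u" and Xu: "lowers_seq d X u" and Yu: "raises_seq scale d Y u"
    and Yv: "lowers_seq d Y v" and Xv: "raises_seq scale d X v"
    using assms by (simp_all add: is_XY_basis_iff)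
  have "v (d - m) \<in> span {u m}" if "m \<le> d" for m
    using that
  proof (induction m)
    case 0
    show ?case
      using lowers_seq_kernel[OF u X Xu] Xv by (simp add: raises_seq_def)
  next
    case (Suc m)
    obtain b where "b \<noteq> 0" "Y (u m) = b *s u (Suc m)"
      using Yu Suc.prems unfolding raises_seq_def by (meson Suc_le_lessD)
    then have image: "Y ` span {u m} = span {u (Suc m)}"
      by (simp add: linear_image_span_singleton[OF Y] span_singleton_scale)
    have "v (d - Suc m) = Y (v (d - m))"
      using Yv Suc.prems by (simp add: lowers_seq_def)
    also have "\<dots> \<in> Y ` span {u m}"
      using Suc by simp
    finally show ?case by (simp only: image)
  qed
  then show ?thesis
    unfolding trans_antidiag_iff by (metis diff_diff_cancel diff_le_self)
qed

lemma six_bases_triple_exists: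
  assumes u1: "is_basis_seq scale d u1" and u2: "is_basis_seq scale d u2"
    and u3: "is_basis_seq scale d u3" and u4: "is_basis_seq scale d u4"
    and u5: "is_basis_seq scale d u5" and u6: "is_basis_seq scale d u6"
    and t12: "trans_UTT scale d u1 u2" and t34: "trans_UTT scale d u3 u4"
    and t56: "trans_UTT scale d u5 u6" and t23: "trans_antidiag scale d u2 u3"
    and t45: "trans_antidiag scale d u4 u5" and t61: "trans_antidiag scale d u6 u1"
  shows "\<exists>A B C. six_bases_triple scale d u1 u2 u3 u4 u5 u6 A B C"
proof -
  obtain A where A: "Vector_Spaces.linear scale scale A" and A1: "lowers_seq d A u1"
    using lowers_seq_exists[OF u1] .
  obtain B where B: "Vector_Spaces.linear scale scale B" and B3: "lowers_seq d B u3"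
    using lowers_seq_exists[OF u3] .
  obtain C where C: "Vector_Spaces.linear scale scale C" and C5: "lowers_seq d C u5"
    using lowers_seq_exists[OF u5] .
  note A2 = trans_UTT_imp_lowers_seq[OF A A1 t12]
    and B4 = trans_UTT_imp_lowers_seq[OF B B3 t34]
    and C6 = trans_UTT_imp_lowers_seq[OF C C5 t56]
  have "is_XY_basis scale d A C u1" "is_XY_basis scale d A B u2" "is_XY_basis scale d B A u3"
    "is_XY_basis scale d B C u4" "is_XY_basis scale d C B u5" "is_XY_basis scale d C A u6"
    using A B C u1 u2 u3 u4 u5 u6 A1 A2 B3 B4 C5 C6
      trans_antidiag_imp_raises_seq[OF u1 C C6 t61]
      trans_antidiag_imp_raises_seq[OF u2 B B3 trans_antidiag_sym[OF u3 t23]]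
      trans_antidiag_imp_raises_seq[OF u3 A A2 t23]
      trans_antidiag_imp_raises_seq[OF u4 C C5 trans_antidiag_sym[OF u5 t45]]
      trans_antidiag_imp_raises_seq[OF u5 B B4 t45]
      trans_antidiag_imp_raises_seq[OF u6 A A1 trans_antidiag_sym[OF u1 t61]]
    by (simp_all add: is_XY_basis_iff)
  then have "six_bases_triple scale d u1 u2 u3 u4 u5 u6 A B C"
    by (simp add: six_bases_triple_def is_LR_triple_def is_XY_basis_def)
  then show ?thesis by blast
qed

lemma six_bases_triple_transitions:
  assumes "six_bases_triple scale d u1 u2 u3 u4 u5 u6 A B C"
  shows "trans_UTT scale d u1 u2 \<and> trans_UTT scale d u3 u4 \<and> trans_UTT scale d u5 u6 \<and>
    trans_antidiag scale d u2 u3 \<and> trans_antidiag scale d u4 u5 \<and> trans_antidiag scale d u6 u1"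
proof -
  have AC1: "is_XY_basis scale d A C u1" and AB2: "is_XY_basis scale d A B u2"
    and BA3: "is_XY_basis scale d B A u3" and BC4: "is_XY_basis scale d B C u4"
    and CB5: "is_XY_basis scale d C B u5" and CA6: "is_XY_basis scale d C A u6"
    using assms by (simp_all add: six_bases_triple_def)
  have "trans_UTT scale d u1 u2" "trans_UTT scale d u3 u4" "trans_UTT scale d u5 u6"
    using AC1 AB2 BA3 BC4 CB5 CA6 by (auto simp: is_XY_basis_iff intro: lowers_seq_imp_trans_UTT)
  moreover have "trans_antidiag scale d u2 u3" "trans_antidiag scale d u4 u5"
    "trans_antidiag scale d u6 u1"
    using XY_bases_imp_trans_antidiag AB2 BA3 BC4 CB5 CA6 AC1 by blast+
  ultimately show ?thesis by blast
qed

lemma six_bases_triple_unique: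
  assumes "six_bases_triple scale d u1 u2 u3 u4 u5 u6 A B C"
    and "six_bases_triple scale d u1 u2 u3 u4 u5 u6 A' B' C'"
  shows "A = A' \<and> B = B' \<and> C = C'"
  using assms lowers_seq_unique
  by (auto simp: six_bases_triple_def is_XY_basis_iff)

end

theorem theorem34p1:
  fixes scale :: "'f::field \<Rightarrow> 'v::ab_group_add \<Rightarrow> 'v"
    and d :: nat
    and u1 u2 u3 u4 u5 u6 :: "nat \<Rightarrow> 'v"
  assumes "vector_space scale"
    and "vector_space.dim scale (UNIV :: 'v set) = d + 1"
    and "is_basis_seq scale d u1" "is_basis_seq scale d u2" "is_basis_seq scale d u3"
    and "is_basis_seq scale d u4" "is_basis_seq scale d u5" "is_basis_seq scale d u6"
  shows "((trans_UTT scale d u1 u2 \<and> trans_UTT scale d u3 u4 \<and> trans_UTT scale d u5 u6 \<and>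
           trans_antidiag scale d u2 u3 \<and> trans_antidiag scale d u4 u5 \<and> trans_antidiag scale d u6 u1)
          \<longleftrightarrow> (\<exists>A B C. six_bases_triple scale d u1 u2 u3 u4 u5 u6 A B C))
       \<and> (\<forall>A B C A' B' C'.
            six_bases_triple scale d u1 u2 u3 u4 u5 u6 A B C \<and>
            six_bases_triple scale d u1 u2 u3 u4 u5 u6 A' B' C' \<longrightarrow>
            A = A' \<and> B = B' \<and> C = C')"
proof -
  interpret vector_space scale by (rule assms(1))
  show ?thesis
  proof (intro conjI iffI allI impI)
    show "\<exists>A B C. six_bases_triple scale d u1 u2 u3 u4 u5 u6 A B C"
      if "trans_UTT scale d u1 u2 \<and> trans_UTT scale d u3 u4 \<and> trans_UTT scale d u5 u6 \<and>
        trans_antidiag scale d u2 u3 \<and> trans_antidiag scale d u4 u5 \<and> trans_antidiag scale d u6 u1"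
      using that by (intro six_bases_triple_exists[OF assms(3-8)]) simp_all
  qed (auto dest: six_bases_triple_transitions six_bases_triple_unique)
qed

end
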